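(* Let $X$ be an operator on $(\mathbb C^d)^{\otimes n}$ that commutes with $P(\pi)$ for every permutation $\pi\in\mathfrak S_n$, where $P(\pi)|\psi_1\rangle\otimes\cdots\otimes|\psi_n\rangle=|\psi_{\pi^{-1}(1)}\rangle\otimes\cdots\otimes|\psi_{\pi^{-1}(n)}\rangle$. Then the number of distinct eigenvalues of $X$ satisfies $|\mathrm{spec}(X)|\le(n+1)^d(n+d)^{d^2}$. *)

theory Defs
  imports "HOL-Analysis.Analysis" "HOL-Combinatorics.Permutations"
begin

text \<open>Computational basis of (C^d)^(tensor n): words w with w i < d for i < n
  (and w i = 0 for i \<ge> n, to make the representation canonical).
  Basis vector e_w corresponds to e_{w 0} \<otimes> ... \<otimes> e_{w (n-1)}.\<close>
definition words :: "nat \<Rightarrow> nat \<Rightarrow> (nat \<Rightarrow> nat) set" where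
  "words n d = {w. (\<forall>i<n. w i < d) \<and> (\<forall>i\<ge>n. w i = 0)}"

text \<open>An operator on (C^d)^(tensor n) is given by its matrix entries X a b
  (a, b basis words); only entries on words n d matter.\<close>
type_synonym op = "(nat \<Rightarrow> nat) \<Rightarrow> (nat \<Rightarrow> nat) \<Rightarrow> complex"

text \<open>Permutation operator: P(pi) e_w = e_{w \<circ> pi^{-1}}, i.e. the tensor factor in
  position i is the one previously at position pi^{-1}(i).\<close>
definition perm_op :: "(nat \<Rightarrow> nat) \<Rightarrow> op" where
  "perm_op \<pi> a b = (if a = b \<circ> inv \<pi> then 1 else 0)"

definition op_mult :: "nat \<Rightarrow> nat \<Rightarrow> op \<Rightarrow> op \<Rightarrow> op" where
  "op_mult n d A B a b = (\<Sum>u\<in>words n d. A a u * B u b)"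

definition spec :: "nat \<Rightarrow> nat \<Rightarrow> op \<Rightarrow> complex set" where
  "spec n d X = {c. \<exists>v :: (nat \<Rightarrow> nat) \<Rightarrow> complex.
      (\<exists>w\<in>words n d. v w \<noteq> 0) \<and>
      (\<forall>a\<in>words n d. (\<Sum>u\<in>words n d. X a u * v u) = c * v a)}"

end

theory Submission
  imports Defs
begin

text \<open>Every power of \<open>X\<close> commutes with all \<open>P(\<pi>)\<close>, so its matrix entry at a pair of
  basis words \<open>(a, b)\<close> depends only on the multiset of letter pairs \<open>(a t, b t)\<close>; there
  are at most \<open>(n + 1) ^ (d * d)\<close> such multisets. Hence the powers \<open>X^0, \<dots>, X^N\<close>, with
  \<open>N\<close> the number of these multisets, are linearly dependent, i.e. some nonzero polynomial
  of degree at most \<open>N\<close> annihilates \<open>X\<close>, and every eigenvalue of \<open>X\<close> is one of its roots.\<close>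

lemma exists_nontrivial_vanishing_combination:
  fixes f :: "'k \<Rightarrow> 'x \<Rightarrow> 'a::field"
  assumes "finite Q" "finite K" "card Q < card K"
  shows "\<exists>c. (\<exists>k\<in>K. c k \<noteq> 0) \<and> (\<forall>x\<in>Q. (\<Sum>k\<in>K. c k * f k x) = 0)"
  using assms
proof (induction Q arbitrary: K f rule: finite_induct)
  case empty
  then show ?case by (intro exI[of _ "\<lambda>_. 1"]) (auto simp: card_gt_0_iff)
next
  case (insert x0 Q)
  show ?case
  proof (cases "\<forall>k\<in>K. f k x0 = 0")
    case True
    with insert show ?thesis by fastforce
  next
    case False
    then obtain j where j: "j \<in> K" "f j x0 \<noteq> 0" by auto
    \<comment> \<open>Gaussian elimination: the functions \<open>g k\<close> all vanish at \<open>x0\<close>.\<close>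
    define g where "g k x = f k x - f k x0 / f j x0 * f j x" for k x
    have "card Q < card (K - {j})" using insert j by auto
    then obtain b where b: "\<exists>k\<in>K - {j}. b k \<noteq> 0" "\<forall>x\<in>Q. (\<Sum>k\<in>K - {j}. b k * g k x) = 0"
      using insert.IH[of "K - {j}" g] insert.prems by auto
    define c where "c = b(j := - (\<Sum>k\<in>K - {j}. b k * f k x0) / f j x0)"
    have elim: "(\<Sum>k\<in>K. c k * f k x) = (\<Sum>k\<in>K - {j}. b k * g k x)" for x
    proof -
      have "(\<Sum>k\<in>K. c k * f k x) = c j * f j x + (\<Sum>k\<in>K - {j}. b k * f k x)"
        using j insert.prems by (simp add: sum.remove c_def)
      also have "\<dots> = (\<Sum>k\<in>K - {j}. b k * f k x - b k * f k x0 / f j x0 * f j x)"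
        by (simp add: c_def sum_subtractf sum_divide_distrib sum_distrib_right)
      also have "\<dots> = (\<Sum>k\<in>K - {j}. b k * g k x)"
        by (simp add: g_def algebra_simps)
      finally show ?thesis .
    qed
    have "g k x0 = 0" for k using j by (simp add: g_def)
    then have "\<forall>x\<in>insert x0 Q. (\<Sum>k\<in>K. c k * f k x) = 0"
      using b(2) by (simp add: elim)
    moreover have "\<exists>k\<in>K. c k \<noteq> 0" using b(1) by (auto simp: c_def)
    ultimately show ?thesis by blast
  qed
qed

lemma finite_words: "finite (words n d)"
proof (induction n)
  case 0
  have "words 0 d \<subseteq> {\<lambda>_. 0}" by (auto simp: words_def)
  then show ?case using finite_subset by blast
next
  case (Suc n)
  have "words (Suc n) d \<subseteq> (\<lambda>(x, w). w(n := x)) ` ({..<d} \<times> words n d)"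
  proof
    fix w assume w: "w \<in> words (Suc n) d"
    then have "w(n := 0) \<in> words n d" "w n < d" by (auto simp: words_def)
    then show "w \<in> (\<lambda>(x, w). w(n := x)) ` ({..<d} \<times> words n d)"
      by (intro image_eqI[of _ _ "(w n, w(n := 0))"]) auto
  qed
  then show ?case using Suc finite_subset by blast
qed

lemma comp_permutes_in_words:
  assumes "\<pi> permutes {..<n}" "w \<in> words n d"
  shows "w \<circ> \<pi> \<in> words n d"
  using assms permutes_in_image[OF assms(1)] permutes_not_in[OF assms(1)]
  unfolding words_def by auto

lemma bij_betw_comp_permutes_words:
  assumes "\<pi> permutes {..<n}"
  shows "bij_betw (\<lambda>w. w \<circ> \<pi>) (words n d) (words n d)"
proof (rule bij_betw_byWitness[where f' = "\<lambda>w. w \<circ> inv \<pi>"])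
  show "\<forall>w\<in>words n d. w \<circ> \<pi> \<circ> inv \<pi> = w" "\<forall>w\<in>words n d. w \<circ> inv \<pi> \<circ> \<pi> = w"
    using permutes_inv_o[OF assms] by (simp_all add: comp_assoc)
  show "(\<lambda>w. w \<circ> \<pi>) ` words n d \<subseteq> words n d" "(\<lambda>w. w \<circ> inv \<pi>) ` words n d \<subseteq> words n d"
    using comp_permutes_in_words[OF assms] comp_permutes_in_words[OF permutes_inv[OF assms]]
    by auto
qed

lemma op_mult_perm_op_left:
  assumes "\<pi> permutes {..<n}" "a \<in> words n d"
  shows "op_mult n d (perm_op \<pi>) X a b = X (a \<circ> \<pi>) b"
proof -
  have "a = u \<circ> inv \<pi> \<longleftrightarrow> u = a \<circ> \<pi>" for u
    using permutes_inv_o[OF assms(1)] by (auto simp: comp_assoc)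
  then have "op_mult n d (perm_op \<pi>) X a b = (\<Sum>u\<in>words n d. if u = a \<circ> \<pi> then X u b else 0)"
    unfolding op_mult_def perm_op_def by (intro sum.cong) auto
  then show ?thesis
    using comp_permutes_in_words[OF assms] finite_words by simp
qed

lemma op_mult_perm_op_right:
  assumes "\<pi> permutes {..<n}" "b \<in> words n d"
  shows "op_mult n d X (perm_op \<pi>) a b = X a (b \<circ> inv \<pi>)"
proof -
  have "op_mult n d X (perm_op \<pi>) a b = (\<Sum>u\<in>words n d. if u = b \<circ> inv \<pi> then X a u else 0)"
    unfolding op_mult_def perm_op_def by (intro sum.cong) auto
  then show ?thesis
    using comp_permutes_in_words[OF permutes_inv[OF assms(1)] assms(2)] finite_words by simp
qed

definition perm_invariant :: "nat \<Rightarrow> nat \<Rightarrow> op \<Rightarrow> bool" where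
  "perm_invariant n d X \<longleftrightarrow> (\<forall>\<pi> a b. \<pi> permutes {..<n} \<longrightarrow> a \<in> words n d \<longrightarrow> b \<in> words n d \<longrightarrow>
      X (a \<circ> \<pi>) (b \<circ> \<pi>) = X a b)"

lemma commuting_imp_perm_invariant:
  assumes "\<And>\<pi>. \<pi> permutes {..<n} \<Longrightarrow>
     (\<forall>a\<in>words n d. \<forall>b\<in>words n d.
        op_mult n d (perm_op \<pi>) X a b = op_mult n d X (perm_op \<pi>) a b)"
  shows "perm_invariant n d X"
  unfolding perm_invariant_def
proof (intro allI impI)
  fix \<pi> a b assume \<pi>: "\<pi> permutes {..<n}" and a: "a \<in> words n d" and b: "b \<in> words n d"
  have b\<pi>: "b \<circ> \<pi> \<in> words n d" using comp_permutes_in_words[OF \<pi> b] .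
  have "X (a \<circ> \<pi>) (b \<circ> \<pi>) = op_mult n d (perm_op \<pi>) X a (b \<circ> \<pi>)"
    using op_mult_perm_op_left[OF \<pi> a] by simp
  also have "\<dots> = op_mult n d X (perm_op \<pi>) a (b \<circ> \<pi>)"
    using assms[OF \<pi>] a b\<pi> by blast
  also have "\<dots> = X a (b \<circ> \<pi> \<circ> inv \<pi>)"
    using op_mult_perm_op_right[OF \<pi> b\<pi>] .
  also have "b \<circ> \<pi> \<circ> inv \<pi> = b"
    using permutes_inv_o[OF \<pi>] by (simp add: comp_assoc)
  finally show "X (a \<circ> \<pi>) (b \<circ> \<pi>) = X a b" .
qed

fun op_power :: "nat \<Rightarrow> nat \<Rightarrow> op \<Rightarrow> nat \<Rightarrow> op" where
  "op_power n d X 0 = (\<lambda>a b. if a = b then 1 else 0)"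
| "op_power n d X (Suc k) = op_mult n d X (op_power n d X k)"

lemma perm_invariant_op_power:
  assumes "perm_invariant n d X"
  shows "perm_invariant n d (op_power n d X k)"
proof (induction k)
  case 0
  have "a = b" if "\<pi> permutes {..<n}" "a \<circ> \<pi> = b \<circ> \<pi>" for \<pi> and a b :: "nat \<Rightarrow> nat"
  proof -
    from that(2) have "a \<circ> \<pi> \<circ> inv \<pi> = b \<circ> \<pi> \<circ> inv \<pi>" by simp
    then show "a = b" using permutes_inv_o(1)[OF that(1)] by (simp add: comp_assoc)
  qed
  then show ?case by (auto simp: perm_invariant_def simp del: comp_apply)
next
  case (Suc k)
  show ?case
    unfolding perm_invariant_def
  proof (intro allI impI)
    fix \<pi> a b assume \<pi>: "\<pi> permutes {..<n}" and ab: "a \<in> words n d" "b \<in> words n d"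
    have "op_power n d X (Suc k) (a \<circ> \<pi>) (b \<circ> \<pi>)
        = (\<Sum>u\<in>words n d. X (a \<circ> \<pi>) (u \<circ> \<pi>) * op_power n d X k (u \<circ> \<pi>) (b \<circ> \<pi>))"
      using sum.reindex_bij_betw[OF bij_betw_comp_permutes_words[OF \<pi>, of d],
          of "\<lambda>u. X (a \<circ> \<pi>) u * op_power n d X k u (b \<circ> \<pi>)"]
      by (simp add: op_mult_def)
    also have "\<dots> = op_power n d X (Suc k) a b"
      using assms Suc \<pi> ab by (simp add: op_mult_def perm_invariant_def del: comp_apply)
    finally show "op_power n d X (Suc k) (a \<circ> \<pi>) (b \<circ> \<pi>) = op_power n d X (Suc k) a b" .
  qed
qed

lemma op_power_eigenvector:
  assumes eig: "\<forall>a\<in>words n d. (\<Sum>u\<in>words n d. X a u * v u) = c * v a"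
    and "a \<in> words n d"
  shows "(\<Sum>u\<in>words n d. op_power n d X k a u * v u) = c ^ k * v a"
  using \<open>a \<in> words n d\<close>
proof (induction k arbitrary: a)
  case 0
  have "(\<Sum>u\<in>words n d. op_power n d X 0 a u * v u) = (\<Sum>u\<in>words n d. if u = a then v u else 0)"
    by (intro sum.cong) auto
  then show ?case using 0 finite_words by simp
next
  case (Suc k)
  have "(\<Sum>u\<in>words n d. op_power n d X (Suc k) a u * v u)
      = (\<Sum>w\<in>words n d. X a w * (\<Sum>u\<in>words n d. op_power n d X k w u * v u))"
    unfolding op_power.simps op_mult_def sum_distrib_right sum_distrib_left mult.assoc
    by (rule sum.swap)
  also have "\<dots> = c ^ k * (\<Sum>w\<in>words n d. X a w * v w)"
    using Suc.IH by (simp add: sum_distrib_left mult.left_commute)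
  also have "\<dots> = c ^ Suc k * v a"
    using eig Suc.prems by simp
  finally show ?case .
qed

text \<open>The \<open>S\<^sub>n\<close>-orbit of a pair of basis words is recorded by the multiset of its columns.\<close>

definition pair_type :: "nat \<Rightarrow> (nat \<Rightarrow> nat) \<Rightarrow> (nat \<Rightarrow> nat) \<Rightarrow> (nat \<times> nat) multiset" where
  "pair_type n a b = mset (map (\<lambda>t. (a t, b t)) [0..<n])"

definition pair_types :: "nat \<Rightarrow> nat \<Rightarrow> (nat \<times> nat) multiset set" where
  "pair_types n d = (\<lambda>(a, b). pair_type n a b) ` (words n d \<times> words n d)"

lemma pair_type_eq_imp_permutes:
  assumes "a \<in> words n d" "b \<in> words n d" "a' \<in> words n d" "b' \<in> words n d"
    and "pair_type n a b = pair_type n a' b'"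
  obtains \<pi> where "\<pi> permutes {..<n}" "a' = a \<circ> \<pi>" "b' = b \<circ> \<pi>"
proof -
  let ?cols = "\<lambda>a b. map (\<lambda>t. (a t, b t)) [0..<n]"
  obtain \<pi> where \<pi>: "\<pi> permutes {..<n}" "permute_list \<pi> (?cols a b) = ?cols a' b'"
    using mset_eq_permutation[of "?cols a' b'" "?cols a b"] assms(5)
    by (auto simp: pair_type_def)
  have "a' t = a (\<pi> t) \<and> b' t = b (\<pi> t)" for t
  proof (cases "t < n")
    case True
    then have "permute_list \<pi> (?cols a b) ! t = ?cols a' b' ! t" using \<pi>(2) by simp
    moreover have "\<pi> t < n" using permutes_in_image[OF \<pi>(1)] True by auto
    ultimately show ?thesis using True by (simp add: permute_list_def)
  next
    case False
    then show ?thesis using assms(1-4) permutes_not_in[OF \<pi>(1), of t] by (auto simp: words_def)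
  qed
  then show ?thesis using that \<pi>(1) by fastforce
qed

lemma perm_invariant_pair_type_eq:
  assumes "perm_invariant n d Y"
    and "a \<in> words n d" "b \<in> words n d" "a' \<in> words n d" "b' \<in> words n d"
    and "pair_type n a b = pair_type n a' b'"
  shows "Y a' b' = Y a b"
proof -
  obtain \<pi> where "\<pi> permutes {..<n}" "a' = a \<circ> \<pi>" "b' = b \<circ> \<pi>"
    using pair_type_eq_imp_permutes[OF assms(2-6)] .
  then show ?thesis using assms(1-3) unfolding perm_invariant_def by simp
qed

lemma finite_card_pair_types:
  "finite (pair_types n d) \<and> card (pair_types n d) \<le> (n + 1) ^ (d * d)"
proof -
  define A where "A = {..<d} \<times> {..<d}"
  define counts where "counts M = (\<lambda>x\<in>A. count M x)" for M :: "(nat \<times> nat) multiset"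
  have set_mset: "set_mset M \<subseteq> A" if "M \<in> pair_types n d" for M
    using that by (auto simp: pair_types_def pair_type_def A_def words_def)
  have sub: "counts ` pair_types n d \<subseteq> PiE A (\<lambda>_. {..n})"
  proof -
    have "count (pair_type n a b) x \<le> n" for a b x
      using count_le_size[of "pair_type n a b" x] by (simp add: pair_type_def)
    then show ?thesis by (auto simp: counts_def pair_types_def)
  qed
  have inj: "inj_on counts (pair_types n d)"
  proof (rule inj_onI, rule multiset_eqI)
    fix M M' x assume M: "M \<in> pair_types n d" "M' \<in> pair_types n d" "counts M = counts M'"
    show "count M x = count M' x"
    proof (cases "x \<in> A")
      case True
      then show ?thesis using fun_cong[OF M(3), of x] by (simp add: counts_def)
    next
      case False
      then show ?thesis using set_mset[OF M(1)] set_mset[OF M(2)] by (metis count_eq_zero_iff subsetD)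
    qed
  qed
  have fin: "finite (PiE A (\<lambda>_. {..n}))"
    by (auto simp: A_def intro: finite_PiE)
  have "finite (pair_types n d)"
    using finite_imageD[OF finite_subset[OF sub fin] inj] .
  moreover have "card (pair_types n d) \<le> card (PiE A (\<lambda>_. {..n}))"
    using card_inj_on_le[OF inj sub fin] .
  moreover have "card (PiE A (\<lambda>_. {..n})) = (n + 1) ^ (d * d)"
    by (simp add: A_def card_PiE)
  ultimately show ?thesis by simp
qed

lemma perm_invariant_annihilating_polynomial:
  assumes "perm_invariant n d X"
  defines "N \<equiv> card (pair_types n d)"
  obtains c where "\<exists>k\<le>N. c k \<noteq> 0"
    and "\<forall>a\<in>words n d. \<forall>b\<in>words n d. (\<Sum>k\<le>N. c k * op_power n d X k a b) = 0"
proof -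
  have "\<forall>M\<in>pair_types n d. \<exists>p\<in>words n d \<times> words n d. pair_type n (fst p) (snd p) = M"
    by (auto simp: pair_types_def)
  then obtain rep where rep: "\<And>M. M \<in> pair_types n d \<Longrightarrow>
      rep M \<in> words n d \<times> words n d \<and> pair_type n (fst (rep M)) (snd (rep M)) = M"
    by metis
  obtain c where c: "\<exists>k\<in>{..N}. c k \<noteq> 0"
    and vanish: "\<forall>M\<in>pair_types n d. (\<Sum>k\<in>{..N}. c k * op_power n d X k (fst (rep M)) (snd (rep M))) = 0"
    using exists_nontrivial_vanishing_combination[of "pair_types n d" "{..N}"
        "\<lambda>k M. op_power n d X k (fst (rep M)) (snd (rep M))"] finite_card_pair_types
    by (auto simp: N_def)
  have "(\<Sum>k\<le>N. c k * op_power n d X k a b) = 0" if ab: "a \<in> words n d" "b \<in> words n d" for a b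
  proof -
    have M: "pair_type n a b \<in> pair_types n d" using ab by (auto simp: pair_types_def)
    obtain a' b' where rep_ab: "rep (pair_type n a b) = (a', b')" by fastforce
    with rep[OF M] have a'b': "a' \<in> words n d" "b' \<in> words n d" "pair_type n a' b' = pair_type n a b"
      by auto
    have "op_power n d X k a b = op_power n d X k a' b'" for k
      using perm_invariant_pair_type_eq[OF perm_invariant_op_power[OF assms(1)] a'b'(1,2) ab] a'b'(3)
      by simp
    then show ?thesis using vanish[rule_format, OF M] rep_ab by simp
  qed
  then show ?thesis using that c by blast
qed

lemma spec_subset_roots_of_annihilating_polynomial:
  assumes "\<forall>a\<in>words n d. \<forall>b\<in>words n d. (\<Sum>k\<le>N. c k * op_power n d X k a b) = 0"
  shows "spec n d X \<subseteq> {z. (\<Sum>k\<le>N. c k * z ^ k) = 0}"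
proof
  fix z assume "z \<in> spec n d X"
  then obtain v a where a: "a \<in> words n d" "v a \<noteq> 0"
    and eig: "\<forall>a\<in>words n d. (\<Sum>u\<in>words n d. X a u * v u) = z * v a"
    unfolding spec_def by blast
  have "0 = (\<Sum>u\<in>words n d. (\<Sum>k\<le>N. c k * op_power n d X k a u) * v u)"
    using assms a(1) by (simp cong: sum.cong)
  also have "\<dots> = (\<Sum>k\<le>N. c k * (\<Sum>u\<in>words n d. op_power n d X k a u * v u))"
    unfolding sum_distrib_right sum_distrib_left mult.assoc by (rule sum.swap)
  also have "\<dots> = (\<Sum>k\<le>N. c k * z ^ k) * v a"
    using op_power_eigenvector[OF eig a(1)] by (simp add: sum_distrib_right mult.assoc)
  finally show "z \<in> {z. (\<Sum>k\<le>N. c k * z ^ k) = 0}" using a(2) by simp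
qed

theorem lemmaA1:
  fixes n d :: nat and X :: op
  assumes "\<And>\<pi>. \<pi> permutes {..<n} \<Longrightarrow>
     (\<forall>a\<in>words n d. \<forall>b\<in>words n d.
        op_mult n d (perm_op \<pi>) X a b = op_mult n d X (perm_op \<pi>) a b)"
  shows "finite (spec n d X) \<and>
         card (spec n d X) \<le> (n + 1) ^ d * (n + d) ^ (d ^ 2)"
proof -
  define N where "N = card (pair_types n d)"
  have "perm_invariant n d X"
    using commuting_imp_perm_invariant[OF assms] .
  then obtain c where nonzero: "\<exists>k\<le>N. c k \<noteq> 0"
    and annihilates: "\<forall>a\<in>words n d. \<forall>b\<in>words n d. (\<Sum>k\<le>N. c k * op_power n d X k a b) = 0"
    unfolding N_def by (rule perm_invariant_annihilating_polynomial)
  then obtain k where ck: "k \<le> N" "c k \<noteq> 0" by blast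
  note roots = polyfun_roots_finite[where c = c, OF ck(2,1)] polyfun_roots_card[where c = c, OF ck(2,1)]
  have spec: "spec n d X \<subseteq> {z. (\<Sum>k\<le>N. c k * z ^ k) = 0}"
    using spec_subset_roots_of_annihilating_polynomial[OF annihilates] .
  have "card (spec n d X) \<le> N"
    using card_mono[OF roots(1) spec] roots(2) by linarith
  also have "N \<le> (n + 1) ^ (d * d)"
    using finite_card_pair_types by (simp add: N_def)
  also have "\<dots> \<le> (n + d) ^ (d ^ 2)"
    by (cases "d = 0") (simp_all add: power2_eq_square power_mono)
  also have "\<dots> \<le> (n + 1) ^ d * (n + d) ^ (d ^ 2)"
    by simp
  finally show ?thesis using finite_subset[OF spec roots(1)] by simp
qed

end
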